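(* Let $(H_X,H_Z)$ be a CSS code on $n$ qubits with $k$ logical qubits and $Z$-distance $d_Z$. Define the CSS code on $2n$ qubits with $X$-stabilizer matrix $H'_X=\begin{pmatrix}H_X&H_X\\0&H_Z\end{pmatrix}$ and $Z$-stabilizer matrix $H'_Z=\begin{pmatrix}H_Z&0\\H_X&H_X\end{pmatrix}$. Then $H'_X{H'_Z}^T=0$, the code encodes $2k$ logical qubits, and its $X$- and $Z$-distances are both equal to $$d'=\min\Big[d_Z,\ \min_{l\in\ker H_Z\setminus\mathrm{rs}(H_X),\ g\in\ker H_X}\big(2|l|+|g|-2|l\wedge g|\big)\Big].$$
   Context: Arithmetic over $\mathbb F_2$; $|v|$ is Hamming weight; $l\wedge g$ is the coordinatewise product; $\mathrm{rs}$ is row space and $\ker M=\{v:Mv^T=0\}$. For a CSS code $(H_X,H_Z)$: $k=n-\operatorname{rank}H_X-\operatorname{rank}H_Z$, $d_X=\min\{|v|:v\in\ker H_Z\setminus\mathrm{rs}(H_X)\}$, $d_Z=\min\{|v|:v\in\ker H_X\setminus\mathrm{rs}(H_Z)\}$. The new code corresponds to placing the code and its Hadamard-dual side by side and applying transversal CNOTs from the first to the second block. *)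

theory Defs
  imports "Jordan_Normal_Form.VS_Connect" "Jordan_Normal_Form.DL_Rank"
          "Jordan_Normal_Form.Matrix_Kernel" "HOL-Library.Z2" "HOL-Library.Extended_Nat"
begin

definition hwt :: "bit vec \<Rightarrow> nat" where
  "hwt v = card {i. i < dim_vec v \<and> v $ i \<noteq> 0}"

definition vwedge :: "bit vec \<Rightarrow> bit vec \<Rightarrow> bit vec" where
  "vwedge l g = vec (dim_vec l) (\<lambda>i. l $ i * g $ i)"

text \<open>Rank over F_2 (column rank = row rank); columns live in F_2^(dim_row H).\<close>
definition rank2 :: "bit mat \<Rightarrow> nat" where
  "rank2 H = vec_space.rank (dim_row H) (H :: bit mat)"

definition rs :: "bit mat \<Rightarrow> bit vec set" where
  "rs H = vec_space.row_space (dim_col H) (H :: bit mat)"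

definition ker :: "bit mat \<Rightarrow> bit vec set" where
  "ker H = mat_kernel H"

definition css_k :: "bit mat \<Rightarrow> bit mat \<Rightarrow> nat" where
  "css_k HX HZ = dim_col HX - rank2 HX - rank2 HZ"

text \<open>Distances as extended naturals: minimum over an empty set is infinity.\<close>
definition css_dX :: "bit mat \<Rightarrow> bit mat \<Rightarrow> enat" where
  "css_dX HX HZ = Inf ((\<lambda>v. enat (hwt v)) ` (ker HZ - rs HX))"

definition css_dZ :: "bit mat \<Rightarrow> bit mat \<Rightarrow> enat" where
  "css_dZ HX HZ = Inf ((\<lambda>v. enat (hwt v)) ` (ker HX - rs HZ))"

end

theory Submission
  imports Defs
begin

text \<open>Undo the transversal CNOT: write a vector of the new code as \<open>l @ (l + c)\<close>.
In the coordinates \<open>(l, c)\<close> the kernel of \<open>H'_Z\<close> becomes \<open>ker HZ \<times> ker HX\<close> and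
the row space of \<open>H'_X\<close> becomes \<open>rs HX \<times> rs HZ\<close>, so the X-logicals are the vectors
\<open>l @ (l + c)\<close> with \<open>(l, c)\<close> in the first product but not in the second, of weight
\<open>|l| + |l + c| = 2|l| + |c| - 2|l \<and> c|\<close>; the Z-logicals are the same vectors with the
halves swapped. If \<open>l \<notin> rs HX\<close> this weight is a term of the second minimum in \<open>d'\<close>;
otherwise \<open>c\<close> is a Z-logical of the old code and the weight is at least \<open>|c|\<close>, with
equality for \<open>l = 0\<close>. The ranks add up because the column space of either new matrix is
the product of the old column spaces, and over \<open>F_2\<close> a column space has \<open>2^rank\<close>
elements.\<close>

section \<open>Concatenated vectors over F_2\<close>

lemma UNIV_bit: "(UNIV :: bit set) = {0, 1}"
  using bit.exhaust by auto

lemma bit_add_eq_0_iff: "(x :: bit) + y = 0 \<longleftrightarrow> x = y"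
  by (cases x; cases y) auto

lemma bit_vec_add_self: "(v :: bit vec) \<in> carrier_vec n \<Longrightarrow> v + v = 0\<^sub>v n"
  by (intro eq_vecI) auto

lemma bit_vec_add_cancel_left:
  "(a :: bit vec) \<in> carrier_vec n \<Longrightarrow> c \<in> carrier_vec n \<Longrightarrow> a + (a + c) = c"
  by (intro eq_vecI) (auto simp: add.assoc[symmetric])

lemma bit_vec_add_cancel_right:
  "(a :: bit vec) \<in> carrier_vec n \<Longrightarrow> c \<in> carrier_vec n \<Longrightarrow> (c + a) + a = c"
  by (intro eq_vecI) (auto simp: add.assoc)

lemma zero_append_vec: "0\<^sub>v (p + q) = 0\<^sub>v p @\<^sub>v (0\<^sub>v q :: 'a :: zero vec)"
  by (intro eq_vecI) auto

lemma carrier_vec_add_image: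
  "carrier_vec (n + m) = (\<lambda>(a, b). a @\<^sub>v b) ` (carrier_vec n \<times> carrier_vec m)"
proof (intro equalityI subsetI)
  fix v assume "v \<in> carrier_vec (n + m)"
  then show "v \<in> (\<lambda>(a, b). a @\<^sub>v b) ` (carrier_vec n \<times> carrier_vec m)"
    by (intro image_eqI[where x = "(vec_first v n, vec_last v m)"]) auto
qed auto

lemma set_eq_append_vecI:
  fixes X Y :: "'a vec set"
  assumes "X \<subseteq> carrier_vec (n + m)" and "Y \<subseteq> carrier_vec (n + m)"
    and "\<And>a b :: 'a vec. a \<in> carrier_vec n \<Longrightarrow> b \<in> carrier_vec m \<Longrightarrow> a @\<^sub>v b \<in> X \<longleftrightarrow> a @\<^sub>v b \<in> Y"
  shows "X = Y"
proof (rule Set.set_eqI)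
  fix v
  show "v \<in> X \<longleftrightarrow> v \<in> Y"
  proof (cases "v \<in> carrier_vec (n + m)")
    case True
    then have "v = vec_first v n @\<^sub>v vec_last v m" by simp
    moreover have "vec_first v n \<in> carrier_vec n" "vec_last v m \<in> carrier_vec m" by auto
    ultimately show ?thesis using assms(3) by metis
  next
    case False
    then show ?thesis using assms(1,2) by blast
  qed
qed

lemma image_add_fst_carrier_vec:
  "(\<lambda>(a, b). (a + b, b)) ` (carrier_vec n \<times> carrier_vec n)
   = (carrier_vec n \<times> carrier_vec n :: (bit vec \<times> bit vec) set)"
  (is "?f ` ?C = ?C")
proof
  show "?C \<subseteq> ?f ` ?C"
  proof clarify
    fix x b :: "bit vec" assume x: "x \<in> carrier_vec n" and b: "b \<in> carrier_vec n"
    show "(x, b) \<in> ?f ` ?C"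
      using bit_vec_add_cancel_right[OF b x] x b by (intro image_eqI[where x = "(x + b, b)"]) auto
  qed
qed auto

lemma image_add_snd_carrier_vec:
  "(\<lambda>(a, b). (a, a + b)) ` (carrier_vec n \<times> carrier_vec n)
   = (carrier_vec n \<times> carrier_vec n :: (bit vec \<times> bit vec) set)"
  (is "?f ` ?C = ?C")
proof
  show "?C \<subseteq> ?f ` ?C"
  proof clarify
    fix a y :: "bit vec" assume a: "a \<in> carrier_vec n" and y: "y \<in> carrier_vec n"
    show "(a, y) \<in> ?f ` ?C"
      using bit_vec_add_cancel_left[OF a y] a y by (intro image_eqI[where x = "(a, a + y)"]) auto
  qed
qed auto

lemma append_mem_image_cnot_iff:
  fixes S :: "(bit vec \<times> bit vec) set"
  assumes S: "S \<subseteq> carrier_vec n \<times> carrier_vec n"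
    and a: "a \<in> carrier_vec n" and b: "b \<in> carrier_vec n"
  shows "a @\<^sub>v b \<in> (\<lambda>(l, c). l @\<^sub>v (l + c)) ` S \<longleftrightarrow> (a, a + b) \<in> S"
proof
  assume "a @\<^sub>v b \<in> (\<lambda>(l, c). l @\<^sub>v (l + c)) ` S"
  then obtain l c where lc: "(l, c) \<in> S" and eq: "a @\<^sub>v b = l @\<^sub>v (l + c)" by auto
  have "l \<in> carrier_vec n" "c \<in> carrier_vec n" using lc S by auto
  then show "(a, a + b) \<in> S" using eq lc a bit_vec_add_cancel_left[of l n c] by auto
next
  assume "(a, a + b) \<in> S"
  moreover have "a @\<^sub>v b = a @\<^sub>v (a + (a + b))" using a b bit_vec_add_cancel_left[of a n b] by simp
  ultimately show "a @\<^sub>v b \<in> (\<lambda>(l, c). l @\<^sub>v (l + c)) ` S" by force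
qed

lemma append_mem_image_swapped_cnot_iff:
  fixes S :: "(bit vec \<times> bit vec) set"
  assumes S: "S \<subseteq> carrier_vec n \<times> carrier_vec n"
    and a: "a \<in> carrier_vec n" and b: "b \<in> carrier_vec n"
  shows "a @\<^sub>v b \<in> (\<lambda>(l, c). (l + c) @\<^sub>v l) ` S \<longleftrightarrow> (b, a + b) \<in> S"
proof
  assume "a @\<^sub>v b \<in> (\<lambda>(l, c). (l + c) @\<^sub>v l) ` S"
  then obtain l c where lc: "(l, c) \<in> S" and eq: "a @\<^sub>v b = (l + c) @\<^sub>v l" by auto
  have l: "l \<in> carrier_vec n" and c: "c \<in> carrier_vec n" using lc S by auto
  then have "a = l + c" "b = l" using eq a by auto
  moreover have "(l + c) + l = c"
    using comm_add_vec[of "l + c" n l] bit_vec_add_cancel_left[OF l c] l c by simp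
  ultimately show "(b, a + b) \<in> S" using lc by simp
next
  assume "(b, a + b) \<in> S"
  moreover have "b + (a + b) = a"
    using comm_add_vec[OF a b] bit_vec_add_cancel_left[OF b a] by simp
  ultimately show "a @\<^sub>v b \<in> (\<lambda>(l, c). (l + c) @\<^sub>v l) ` S" by force
qed

section \<open>Hamming weight\<close>

lemma hwt_eq_sum: "hwt v = (\<Sum>i<dim_vec v. of_bool (v $ i \<noteq> 0))"
proof -
  have "{i. i < dim_vec v \<and> v $ i \<noteq> 0} = {i \<in> {..<dim_vec v}. v $ i \<noteq> 0}" by auto
  then show ?thesis
    unfolding hwt_def card_eq_sum by (simp only: sum.inter_filter[OF finite_lessThan] of_bool_def)
qed

lemma sum_lessThan_add_nat: "(\<Sum>i<n + m. f i) = (\<Sum>i<n. f i) + (\<Sum>i<m. f (n + i :: nat))"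
  by (induction m) (simp_all add: add.assoc)

lemma hwt_append_vec: "hwt (a @\<^sub>v b) = hwt a + hwt b"
proof -
  have "hwt (a @\<^sub>v b) = (\<Sum>i<dim_vec a. of_bool ((a @\<^sub>v b) $ i \<noteq> 0))
      + (\<Sum>i<dim_vec b. of_bool ((a @\<^sub>v b) $ (dim_vec a + i) \<noteq> 0))"
    unfolding hwt_eq_sum by (simp only: index_append_vec(2) sum_lessThan_add_nat)
  also have "\<dots> = hwt a + hwt b"
    unfolding hwt_eq_sum by (intro arg_cong2[where f = "(+)"] sum.cong) auto
  finally show ?thesis .
qed

lemma hwt_zero_vec [simp]: "hwt (0\<^sub>v n) = 0"
  by (simp add: hwt_def)

lemma hwt_add_vwedge:
  assumes dim: "dim_vec a = dim_vec (c :: bit vec)"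
  shows "hwt (a + c) + 2 * hwt (vwedge a c) = hwt a + hwt c"
proof -
  have pointwise: "of_bool (x + y \<noteq> 0) + 2 * of_bool (x * y \<noteq> 0)
      = of_bool (x \<noteq> 0) + (of_bool (y \<noteq> 0) :: nat)" for x y :: bit
    by (cases x; cases y) auto
  have "hwt (a + c) + 2 * hwt (vwedge a c)
      = (\<Sum>i<dim_vec a. of_bool (a $ i + c $ i \<noteq> 0) + 2 * of_bool (a $ i * c $ i \<noteq> 0))"
    unfolding hwt_eq_sum vwedge_def sum.distrib sum_distrib_left using dim
    by (intro arg_cong2[where f = "(+)"] sum.cong) auto
  also have "\<dots> = (\<Sum>i<dim_vec a. of_bool (a $ i \<noteq> 0) + of_bool (c $ i \<noteq> 0))"
    by (simp only: pointwise)
  also have "\<dots> = hwt a + hwt c"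
    using dim by (simp only: hwt_eq_sum sum.distrib)
  finally show ?thesis .
qed

lemma hwt_add_cnot:
  assumes "l \<in> carrier_vec n" and "c \<in> carrier_vec n"
  shows "hwt l + hwt (l + c) = 2 * hwt l + hwt c - 2 * hwt (vwedge l c)"
  using hwt_add_vwedge[of l c] assms by simp

lemma hwt_le_hwt_add_cnot:
  assumes l: "l \<in> carrier_vec n" and c: "c \<in> carrier_vec n"
  shows "hwt c \<le> hwt l + hwt (l + c)"
  using hwt_add_vwedge[of l "l + c"] bit_vec_add_cancel_left[OF l c] l c by simp

section \<open>Kernels, row spaces and ranks over F_2\<close>

lemma zero_mat_mult_vec [simp]:
  "v \<in> carrier_vec nc \<Longrightarrow> 0\<^sub>m nr nc *\<^sub>v v = (0\<^sub>v nr :: 'a :: semiring_0 vec)"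
  by (intro eq_vecI) (auto simp: scalar_prod_def)

lemma ker_carrier_mat: "H \<in> carrier_mat r n \<Longrightarrow> ker H = {v \<in> carrier_vec n. H *\<^sub>v v = 0\<^sub>v r}"
  unfolding ker_def by (simp add: mat_kernel)

lemma rs_carrier_mat:
  assumes H: "H \<in> carrier_mat r n"
  shows "rs H = (\<lambda>y. H\<^sup>T *\<^sub>v y) ` carrier_vec r"
proof -
  interpret vec_space "TYPE(bit)" n .
  have "rs H = {w \<in> carrier_vec n. \<exists>y\<in>carrier_vec r. H\<^sup>T *\<^sub>v y = w}"
    unfolding rs_def using row_space_eq[OF H] H by auto
  then show ?thesis
    using H by (auto intro!: mult_mat_vec_carrier)
qed

lemma card_span_lin_indpt_bit:
  fixes S :: "bit vec set"
  assumes finS: "finite S" and S: "S \<subseteq> carrier_vec m"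
    and indpt: "\<not> LinearCombinations.module.lin_dep class_ring (module_vec TYPE(bit) m) S"
  shows "card (LinearCombinations.module.span class_ring (module_vec TYPE(bit) m) S) = 2 ^ card S"
proof -
  interpret vec_space "TYPE(bit)" m .
  have span: "span S = (\<lambda>a. lincomb a S) ` (S \<rightarrow>\<^sub>E UNIV)"
  proof
    show "span S \<subseteq> (\<lambda>a. lincomb a S) ` (S \<rightarrow>\<^sub>E UNIV)"
    proof
      fix v assume "v \<in> span S"
      then obtain a where v: "v = lincomb a S"
        using LinearCombinations.module.finite_span[OF vec_module finS] S by auto
      have "lincomb (restrict a S) S = lincomb a S"
        by (rule lincomb_cong) (use S in auto)
      then show "v \<in> (\<lambda>a. lincomb a S) ` (S \<rightarrow>\<^sub>E UNIV)"
        using v by (intro image_eqI[of _ _ "restrict a S"]) auto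
    qed
    show "(\<lambda>a. lincomb a S) ` (S \<rightarrow>\<^sub>E UNIV) \<subseteq> span S"
      using LinearCombinations.module.finite_span[OF vec_module finS] S by auto
  qed
  have "inj_on (\<lambda>a. lincomb a S) (S \<rightarrow>\<^sub>E UNIV)"
  proof
    fix a b assume a: "a \<in> S \<rightarrow>\<^sub>E UNIV" and b: "b \<in> S \<rightarrow>\<^sub>E UNIV"
      and eq: "lincomb a S = lincomb b S"
    have "lincomb (\<lambda>v. a v + b v) S = lincomb a S + lincomb b S"
      using lincomb_sum[OF finS S] by auto
    also have "\<dots> = 0\<^sub>v m" using eq lincomb_closed[OF S] bit_vec_add_self by auto
    finally have sum_0: "lincomb (\<lambda>v. a v + b v) S = 0\<^sub>v m" .
    have "\<forall>v\<in>S. a v + b v = 0"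
    proof (rule ccontr)
      assume "\<not> (\<forall>v\<in>S. a v + b v = 0)"
      then obtain v where "v \<in> S" "a v + b v \<noteq> 0" by auto
      then have "lin_dep S"
        using sum_0 finS by (intro lin_dep_crit[where A = S and S = S and v = v]) auto
      with indpt show False by simp
    qed
    then show "a = b"
      using a b by (intro extensionalityI[of _ S]) (auto simp: PiE_def bit_add_eq_0_iff)
  qed
  then have "card (span S) = card (S \<rightarrow>\<^sub>E (UNIV :: bit set))"
    unfolding span by (rule card_image)
  also have "\<dots> = 2 ^ card S"
    using finS by (simp add: card_PiE UNIV_bit numeral_2_eq_2)
  finally show ?thesis .
qed

lemma (in vec_space) span_maximal_lin_indpt:
  assumes W: "W \<subseteq> carrier_vec n" and max: "maximal S (\<lambda>T. T \<subseteq> W \<and> lin_indpt T)"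
  shows "span S = span W"
proof -
  have SW: "S \<subseteq> W" and indpt: "lin_indpt S" using max unfolding maximal_def by auto
  have S: "S \<subseteq> carrier_vec n" using SW W by auto
  have "w \<in> span S" if w: "w \<in> W" for w
  proof (cases "w \<in> S")
    case True
    then show ?thesis using in_own_span[OF S] by auto
  next
    case False
    have "lin_dep (S \<union> {w})"
    proof (rule ccontr)
      assume "lin_indpt (S \<union> {w})"
      then have "S \<union> {w} = S" using max w SW unfolding maximal_def by blast
      then show False using False by auto
    qed
    then show ?thesis using lin_dep_iff_in_span[OF S indpt _ False] w W by auto
  qed
  then have "span W \<subseteq> span S" by (intro span_is_subset span_is_submodule S) auto
  moreover have "span S \<subseteq> span W" using span_is_monotone[OF SW] .
  ultimately show ?thesis by auto
qed

lemma card_mat_mult_vec_image: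
  fixes A :: "bit mat"
  assumes A: "A \<in> carrier_mat m k"
  shows "card ((\<lambda>x. A *\<^sub>v x) ` carrier_vec k) = 2 ^ rank2 A"
proof -
  interpret vec_space "TYPE(bit)" m .
  have cols: "set (cols A) \<subseteq> carrier_vec m" using A cols_dim by blast
  have "lin_indpt {}" by (rule finite_lin_indpt2) auto
  then obtain S where finS: "finite S" and max: "maximal S (\<lambda>T. T \<subseteq> set (cols A) \<and> lin_indpt T)"
    using maximal_exists_superset[of "set (cols A)" "\<lambda>T. T \<subseteq> set (cols A) \<and> lin_indpt T" "{}"]
    by auto
  have S: "S \<subseteq> carrier_vec m" and indpt: "lin_indpt S"
    using max cols unfolding maximal_def by auto
  have "col_space A = (\<lambda>x. A *\<^sub>v x) ` carrier_vec k"
    unfolding col_space_eq[OF A] using A by auto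
  then have "(\<lambda>x. A *\<^sub>v x) ` carrier_vec k = span S"
    using span_maximal_lin_indpt[OF cols max] unfolding col_space_def by simp
  moreover have "rank2 A = card S"
    unfolding rank2_def using rank_card_indpt[OF A max] A by simp
  ultimately show ?thesis
    using card_span_lin_indpt_bit[OF finS S indpt] by simp
qed

lemma rank2_eq_add_if_image_append:
  fixes M A B :: "bit mat"
  assumes M: "M \<in> carrier_mat (r1 + r2) k"
    and A: "A \<in> carrier_mat r1 k1" and B: "B \<in> carrier_mat r2 k2"
    and image: "(\<lambda>x. M *\<^sub>v x) ` carrier_vec k
      = (\<lambda>(y, z). y @\<^sub>v z) ` ((\<lambda>x. A *\<^sub>v x) ` carrier_vec k1 \<times> (\<lambda>x. B *\<^sub>v x) ` carrier_vec k2)"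
  shows "rank2 M = rank2 A + rank2 B"
proof -
  have "inj_on (\<lambda>(y, z). y @\<^sub>v z) ((\<lambda>x. A *\<^sub>v x) ` carrier_vec k1 \<times> Z)" for Z :: "bit vec set"
    using A by (auto intro!: inj_onI simp: append_vec_eq[of _ r1])
  then have "(2 :: nat) ^ rank2 M
      = card ((\<lambda>x. A *\<^sub>v x) ` carrier_vec k1) * card ((\<lambda>x. B *\<^sub>v x) ` carrier_vec k2)"
    using card_mat_mult_vec_image[OF M] image by (simp add: card_image card_cartesian_product)
  also have "\<dots> = 2 ^ (rank2 A + rank2 B)"
    using card_mat_mult_vec_image[OF A] card_mat_mult_vec_image[OF B] by (simp add: power_add)
  finally show ?thesis by simp
qed

section \<open>The doubled code\<close>

definition logical_pairs :: "bit mat \<Rightarrow> bit mat \<Rightarrow> (bit vec \<times> bit vec) set" where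
  "logical_pairs HX HZ = ker HZ \<times> ker HX - rs HX \<times> rs HZ"

locale css_doubling =
  fixes HX HZ :: "bit mat" and n rX rZ :: nat
  assumes HX: "HX \<in> carrier_mat rX n" and HZ: "HZ \<in> carrier_mat rZ n"
begin

abbreviation HX' where "HX' \<equiv> four_block_mat HX HX (0\<^sub>m rZ n) HZ"
abbreviation HZ' where "HZ' \<equiv> four_block_mat HZ (0\<^sub>m rZ n) HX HX"

lemma carrier_HX': "HX' \<in> carrier_mat (rX + rZ) (n + n)"
  using HX HZ by auto

lemma carrier_HZ': "HZ' \<in> carrier_mat (rZ + rX) (n + n)"
  using HX HZ by auto

lemma HX'_mult_append:
  "a \<in> carrier_vec n \<Longrightarrow> b \<in> carrier_vec n \<Longrightarrow> HX' *\<^sub>v (a @\<^sub>v b) = HX *\<^sub>v (a + b) @\<^sub>v HZ *\<^sub>v b"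
  using four_block_mat_mult_vec[OF HX HX _ HZ] HX HZ by (simp add: mult_add_distrib_mat_vec)

lemma HZ'_mult_append:
  "a \<in> carrier_vec n \<Longrightarrow> b \<in> carrier_vec n \<Longrightarrow> HZ' *\<^sub>v (a @\<^sub>v b) = HZ *\<^sub>v a @\<^sub>v HX *\<^sub>v (a + b)"
  using four_block_mat_mult_vec[OF HZ _ HX HX] HX HZ by (simp add: mult_add_distrib_mat_vec)

lemma transpose_HX': "HX'\<^sup>T = four_block_mat HX\<^sup>T (0\<^sub>m n rZ) HX\<^sup>T HZ\<^sup>T"
  using transpose_four_block_mat[OF HX HX _ HZ] by simp

lemma transpose_HZ': "HZ'\<^sup>T = four_block_mat HZ\<^sup>T HX\<^sup>T (0\<^sub>m n rZ) HX\<^sup>T"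
  using transpose_four_block_mat[OF HZ _ HX HX] by simp

lemma append_mem_ker_HX'_iff:
  assumes a: "a \<in> carrier_vec n" and b: "b \<in> carrier_vec n"
  shows "a @\<^sub>v b \<in> ker HX' \<longleftrightarrow> a + b \<in> ker HX \<and> b \<in> ker HZ"
proof -
  have "HX' *\<^sub>v (a @\<^sub>v b) = 0\<^sub>v (rX + rZ) \<longleftrightarrow> HX *\<^sub>v (a + b) = 0\<^sub>v rX \<and> HZ *\<^sub>v b = 0\<^sub>v rZ"
    unfolding HX'_mult_append[OF a b] zero_append_vec
    by (rule append_vec_eq[of _ rX]) (use HX a b in auto)
  then show ?thesis
    using a b
    by (simp add: ker_carrier_mat[OF carrier_HX'] ker_carrier_mat[OF HX] ker_carrier_mat[OF HZ])
qed

lemma append_mem_ker_HZ'_iff: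
  assumes a: "a \<in> carrier_vec n" and b: "b \<in> carrier_vec n"
  shows "a @\<^sub>v b \<in> ker HZ' \<longleftrightarrow> a \<in> ker HZ \<and> a + b \<in> ker HX"
proof -
  have "HZ' *\<^sub>v (a @\<^sub>v b) = 0\<^sub>v (rZ + rX) \<longleftrightarrow> HZ *\<^sub>v a = 0\<^sub>v rZ \<and> HX *\<^sub>v (a + b) = 0\<^sub>v rX"
    unfolding HZ'_mult_append[OF a b] zero_append_vec
    by (rule append_vec_eq[of _ rZ]) (use HZ a in auto)
  then show ?thesis
    using a b
    by (simp add: ker_carrier_mat[OF carrier_HZ'] ker_carrier_mat[OF HX] ker_carrier_mat[OF HZ])
qed

lemma logical_pairs_subset: "logical_pairs HX HZ \<subseteq> carrier_vec n \<times> carrier_vec n"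
  unfolding logical_pairs_def using ker_carrier_mat[OF HX] ker_carrier_mat[OF HZ] by auto

lemma rs_pairs_subset: "rs HX \<times> rs HZ \<subseteq> carrier_vec n \<times> carrier_vec n"
  using rs_carrier_mat[OF HX] rs_carrier_mat[OF HZ] HX HZ by auto

lemma transpose_HX'_mult_append:
  assumes u: "u \<in> carrier_vec rX" and w: "w \<in> carrier_vec rZ"
  shows "HX'\<^sup>T *\<^sub>v (u @\<^sub>v w) = HX\<^sup>T *\<^sub>v u @\<^sub>v (HX\<^sup>T *\<^sub>v u + HZ\<^sup>T *\<^sub>v w)"
  unfolding transpose_HX'
  using four_block_mat_mult_vec[of "HX\<^sup>T" n rX "0\<^sub>m n rZ" rZ "HX\<^sup>T" n "HZ\<^sup>T" u w] HX HZ u w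
  by simp

lemma transpose_HZ'_mult_append:
  assumes u: "u \<in> carrier_vec rZ" and w: "w \<in> carrier_vec rX"
  shows "HZ'\<^sup>T *\<^sub>v (u @\<^sub>v w) = (HX\<^sup>T *\<^sub>v w + HZ\<^sup>T *\<^sub>v u) @\<^sub>v HX\<^sup>T *\<^sub>v w"
proof -
  have "HZ\<^sup>T *\<^sub>v u + HX\<^sup>T *\<^sub>v w = HX\<^sup>T *\<^sub>v w + HZ\<^sup>T *\<^sub>v u"
    by (rule comm_add_vec[of _ n]) (use HX HZ u w in auto)
  then show ?thesis
    unfolding transpose_HZ'
    using four_block_mat_mult_vec[of "HZ\<^sup>T" n rZ "HX\<^sup>T" rX "0\<^sub>m n rZ" n "HX\<^sup>T" u w] HX HZ u w
    by simp
qed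

lemma rs_HX': "rs HX' = (\<lambda>(l, c). l @\<^sub>v (l + c)) ` (rs HX \<times> rs HZ)"
proof -
  have "rs HX' = (\<lambda>(u, w). HX'\<^sup>T *\<^sub>v (u @\<^sub>v w)) ` (carrier_vec rX \<times> carrier_vec rZ)"
    unfolding rs_carrier_mat[OF carrier_HX'] carrier_vec_add_image image_image
    by (simp add: case_prod_beta)
  also have "\<dots> = (\<lambda>(u, w). HX\<^sup>T *\<^sub>v u @\<^sub>v (HX\<^sup>T *\<^sub>v u + HZ\<^sup>T *\<^sub>v w))
      ` (carrier_vec rX \<times> carrier_vec rZ)"
    by (intro image_cong refl) (auto simp: transpose_HX'_mult_append)
  also have "\<dots> = (\<lambda>(l, c). l @\<^sub>v (l + c)) ` (rs HX \<times> rs HZ)"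
    unfolding rs_carrier_mat[OF HX] rs_carrier_mat[OF HZ] by force
  finally show ?thesis .
qed

lemma rs_HZ': "rs HZ' = (\<lambda>(l, c). (l + c) @\<^sub>v l) ` (rs HX \<times> rs HZ)"
proof -
  have "rs HZ' = (\<lambda>(u, w). HZ'\<^sup>T *\<^sub>v (u @\<^sub>v w)) ` (carrier_vec rZ \<times> carrier_vec rX)"
    unfolding rs_carrier_mat[OF carrier_HZ'] carrier_vec_add_image image_image
    by (simp add: case_prod_beta)
  also have "\<dots> = (\<lambda>(u, w). (HX\<^sup>T *\<^sub>v w + HZ\<^sup>T *\<^sub>v u) @\<^sub>v HX\<^sup>T *\<^sub>v w)
      ` (carrier_vec rZ \<times> carrier_vec rX)"
    by (intro image_cong refl) (auto simp: transpose_HZ'_mult_append)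
  also have "\<dots> = (\<lambda>(l, c). (l + c) @\<^sub>v l) ` (rs HX \<times> rs HZ)"
    unfolding rs_carrier_mat[OF HX] rs_carrier_mat[OF HZ] by force
  finally show ?thesis .
qed

lemma append_mem_rs_HX'_iff:
  assumes a: "a \<in> carrier_vec n" and b: "b \<in> carrier_vec n"
  shows "a @\<^sub>v b \<in> rs HX' \<longleftrightarrow> a \<in> rs HX \<and> a + b \<in> rs HZ"
  unfolding rs_HX' using append_mem_image_cnot_iff[OF rs_pairs_subset a b] by simp

lemma append_mem_rs_HZ'_iff:
  assumes a: "a \<in> carrier_vec n" and b: "b \<in> carrier_vec n"
  shows "a @\<^sub>v b \<in> rs HZ' \<longleftrightarrow> b \<in> rs HX \<and> a + b \<in> rs HZ"
  unfolding rs_HZ' using append_mem_image_swapped_cnot_iff[OF rs_pairs_subset a b] by simp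

lemma X_logicals_doubled:
  "ker HZ' - rs HX' = (\<lambda>(l, c). l @\<^sub>v (l + c)) ` logical_pairs HX HZ"
proof (rule set_eq_append_vecI)
  fix a b :: "bit vec" assume a: "a \<in> carrier_vec n" and b: "b \<in> carrier_vec n"
  show "a @\<^sub>v b \<in> ker HZ' - rs HX' \<longleftrightarrow> a @\<^sub>v b \<in> (\<lambda>(l, c). l @\<^sub>v (l + c)) ` logical_pairs HX HZ"
    unfolding Diff_iff append_mem_ker_HZ'_iff[OF a b] append_mem_rs_HX'_iff[OF a b]
      append_mem_image_cnot_iff[OF logical_pairs_subset a b]
    by (simp add: logical_pairs_def)
qed (use ker_carrier_mat[OF carrier_HZ'] logical_pairs_subset in auto)

lemma Z_logicals_doubled:
  "ker HX' - rs HZ' = (\<lambda>(l, c). (l + c) @\<^sub>v l) ` logical_pairs HX HZ"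
proof (rule set_eq_append_vecI)
  fix a b :: "bit vec" assume a: "a \<in> carrier_vec n" and b: "b \<in> carrier_vec n"
  show "a @\<^sub>v b \<in> ker HX' - rs HZ' \<longleftrightarrow> a @\<^sub>v b \<in> (\<lambda>(l, c). (l + c) @\<^sub>v l) ` logical_pairs HX HZ"
    unfolding Diff_iff append_mem_ker_HX'_iff[OF a b] append_mem_rs_HZ'_iff[OF a b]
      append_mem_image_swapped_cnot_iff[OF logical_pairs_subset a b]
    by (auto simp: logical_pairs_def)
qed (use ker_carrier_mat[OF carrier_HX'] logical_pairs_subset in auto)

lemma css_dX_doubled:
  "css_dX HX' HZ' = Inf ((\<lambda>(l, c). enat (hwt l + hwt (l + c))) ` logical_pairs HX HZ)"
proof -
  have "(\<lambda>v. enat (hwt v)) \<circ> (\<lambda>(l, c). l @\<^sub>v (l + c)) = (\<lambda>(l, c). enat (hwt l + hwt (l + c)))"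
    by (simp add: fun_eq_iff hwt_append_vec split: prod.split)
  then show ?thesis
    unfolding css_dX_def X_logicals_doubled image_comp by simp
qed

lemma css_dZ_doubled:
  "css_dZ HX' HZ' = Inf ((\<lambda>(l, c). enat (hwt l + hwt (l + c))) ` logical_pairs HX HZ)"
proof -
  have "(\<lambda>v. enat (hwt v)) \<circ> (\<lambda>(l, c). (l + c) @\<^sub>v l) = (\<lambda>(l, c). enat (hwt l + hwt (l + c)))"
    by (simp add: fun_eq_iff hwt_append_vec split: prod.split)
  then show ?thesis
    unfolding css_dZ_def Z_logicals_doubled image_comp by simp
qed

lemma min_le_weight_logical_pair:
  assumes lc: "(l, c) \<in> logical_pairs HX HZ"
  shows "min (css_dZ HX HZ) (Inf {enat (2 * hwt l' + hwt g - 2 * hwt (vwedge l' g)) | l' g.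
           l' \<in> ker HZ - rs HX \<and> g \<in> ker HX}) \<le> enat (hwt l + hwt (l + c))"
proof -
  have l: "l \<in> carrier_vec n" and c: "c \<in> carrier_vec n" using lc logical_pairs_subset by auto
  show ?thesis
  proof (cases "l \<in> rs HX")
    case False
    then have "enat (hwt l + hwt (l + c))
        \<in> {enat (2 * hwt l' + hwt g - 2 * hwt (vwedge l' g)) | l' g. l' \<in> ker HZ - rs HX \<and> g \<in> ker HX}"
      using lc hwt_add_cnot[OF l c] unfolding logical_pairs_def by blast
    then show ?thesis by (simp add: Inf_lower min.coboundedI2)
  next
    case True
    then have "c \<in> ker HX - rs HZ" using lc unfolding logical_pairs_def by auto
    then have "css_dZ HX HZ \<le> enat (hwt c)" unfolding css_dZ_def by (intro Inf_lower) auto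
    also have "\<dots> \<le> enat (hwt l + hwt (l + c))" using hwt_le_hwt_add_cnot[OF l c] by simp
    finally show ?thesis by (simp add: min.coboundedI1)
  qed
qed

lemma Inf_weight_logical_pairs_le:
  "Inf ((\<lambda>(l, c). enat (hwt l + hwt (l + c))) ` logical_pairs HX HZ)
   \<le> min (css_dZ HX HZ) (Inf {enat (2 * hwt l + hwt g - 2 * hwt (vwedge l g)) | l g.
       l \<in> ker HZ - rs HX \<and> g \<in> ker HX})"
  (is "Inf (?w ` ?P) \<le> min ?dZ (Inf ?T)")
proof -
  have "Inf (?w ` ?P) \<le> ?dZ"
    unfolding css_dZ_def
  proof (rule Inf_greatest)
    fix x assume "x \<in> (\<lambda>v. enat (hwt v)) ` (ker HX - rs HZ)"
    then obtain c where c: "c \<in> ker HX - rs HZ" and x: "x = enat (hwt c)" by blast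
    have "HZ *\<^sub>v 0\<^sub>v n = 0\<^sub>v rZ" using HZ by auto
    then have "0\<^sub>v n \<in> ker HZ" by (simp add: ker_carrier_mat[OF HZ])
    then have "(0\<^sub>v n, c) \<in> ?P" using c unfolding logical_pairs_def by blast
    moreover have "c \<in> carrier_vec n" using c ker_carrier_mat[OF HX] by blast
    then have "x = ?w (0\<^sub>v n, c)" using x by simp
    ultimately have "x \<in> ?w ` ?P" by (rule rev_image_eqI)
    then show "Inf (?w ` ?P) \<le> x" by (rule Inf_lower)
  qed
  moreover have "Inf (?w ` ?P) \<le> Inf ?T"
  proof (rule Inf_greatest)
    fix x assume "x \<in> ?T"
    then obtain l g where l: "l \<in> ker HZ - rs HX" and g: "g \<in> ker HX"
      and x: "x = enat (2 * hwt l + hwt g - 2 * hwt (vwedge l g))" by blast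
    have "l \<in> carrier_vec n" "g \<in> carrier_vec n"
      using l g ker_carrier_mat[OF HX] ker_carrier_mat[OF HZ] by auto
    then have "x = ?w (l, g)" using x hwt_add_cnot by simp
    moreover have "(l, g) \<in> ?P" using l g unfolding logical_pairs_def by blast
    ultimately have "x \<in> ?w ` ?P" by (intro rev_image_eqI)
    then show "Inf (?w ` ?P) \<le> x" by (rule Inf_lower)
  qed
  ultimately show ?thesis by simp
qed

lemma Inf_weight_logical_pairs:
  "Inf ((\<lambda>(l, c). enat (hwt l + hwt (l + c))) ` logical_pairs HX HZ)
   = min (css_dZ HX HZ) (Inf {enat (2 * hwt l + hwt g - 2 * hwt (vwedge l g)) | l g.
       l \<in> ker HZ - rs HX \<and> g \<in> ker HX})"
proof (rule antisym[OF Inf_weight_logical_pairs_le Inf_greatest])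
  fix x assume "x \<in> (\<lambda>(l, c). enat (hwt l + hwt (l + c))) ` logical_pairs HX HZ"
  then obtain l c where "(l, c) \<in> logical_pairs HX HZ" and "x = enat (hwt l + hwt (l + c))" by auto
  then show "min (css_dZ HX HZ) (Inf {enat (2 * hwt l + hwt g - 2 * hwt (vwedge l g)) | l g.
      l \<in> ker HZ - rs HX \<and> g \<in> ker HX}) \<le> x"
    using min_le_weight_logical_pair by simp
qed

lemma image_HX'_mult:
  "(\<lambda>x. HX' *\<^sub>v x) ` carrier_vec (n + n)
   = (\<lambda>(y, z). y @\<^sub>v z) ` ((\<lambda>x. HX *\<^sub>v x) ` carrier_vec n \<times> (\<lambda>x. HZ *\<^sub>v x) ` carrier_vec n)"
proof -
  have "(\<lambda>x. HX' *\<^sub>v x) ` carrier_vec (n + n)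
      = (\<lambda>(x, b). HX *\<^sub>v x @\<^sub>v HZ *\<^sub>v b) ` ((\<lambda>(a, b). (a + b, b)) ` (carrier_vec n \<times> carrier_vec n))"
    unfolding carrier_vec_add_image image_image
    by (intro image_cong refl) (auto simp: HX'_mult_append)
  also have "\<dots>
      = (\<lambda>(y, z). y @\<^sub>v z) ` ((\<lambda>x. HX *\<^sub>v x) ` carrier_vec n \<times> (\<lambda>x. HZ *\<^sub>v x) ` carrier_vec n)"
    unfolding image_add_fst_carrier_vec by force
  finally show ?thesis .
qed

lemma image_HZ'_mult:
  "(\<lambda>x. HZ' *\<^sub>v x) ` carrier_vec (n + n)
   = (\<lambda>(y, z). y @\<^sub>v z) ` ((\<lambda>x. HZ *\<^sub>v x) ` carrier_vec n \<times> (\<lambda>x. HX *\<^sub>v x) ` carrier_vec n)"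
proof -
  have "(\<lambda>x. HZ' *\<^sub>v x) ` carrier_vec (n + n)
      = (\<lambda>(a, y). HZ *\<^sub>v a @\<^sub>v HX *\<^sub>v y) ` ((\<lambda>(a, b). (a, a + b)) ` (carrier_vec n \<times> carrier_vec n))"
    unfolding carrier_vec_add_image image_image
    by (intro image_cong refl) (auto simp: HZ'_mult_append)
  also have "\<dots>
      = (\<lambda>(y, z). y @\<^sub>v z) ` ((\<lambda>x. HZ *\<^sub>v x) ` carrier_vec n \<times> (\<lambda>x. HX *\<^sub>v x) ` carrier_vec n)"
    unfolding image_add_snd_carrier_vec by force
  finally show ?thesis .
qed

lemma css_k_doubled: "css_k HX' HZ' = 2 * css_k HX HZ"
proof -
  have "rank2 HX' = rank2 HX + rank2 HZ"
    by (rule rank2_eq_add_if_image_append[OF carrier_HX' HX HZ image_HX'_mult])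
  moreover have "rank2 HZ' = rank2 HZ + rank2 HX"
    by (rule rank2_eq_add_if_image_append[OF carrier_HZ' HZ HX image_HZ'_mult])
  ultimately show ?thesis
    using HX HZ unfolding css_k_def by simp
qed

lemma doubled_orthogonal:
  assumes css: "HX * HZ\<^sup>T = 0\<^sub>m rX rZ"
  shows "HX' * HZ'\<^sup>T = 0\<^sub>m (rX + rZ) (rZ + rX)"
proof -
  have "HZ * HX\<^sup>T = (HX * HZ\<^sup>T)\<^sup>T"
    using transpose_mult[of HX rX n "HZ\<^sup>T" rZ] HX HZ by simp
  then have ZX: "HZ * HX\<^sup>T = 0\<^sub>m rZ rX" using css by simp
  have XX: "HX * HX\<^sup>T + HX * HX\<^sup>T = 0\<^sub>m rX rX"
    by (intro eq_matI) (use HX in auto)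
  have "HX' * HZ'\<^sup>T
      = four_block_mat (HX * HZ\<^sup>T + HX * 0\<^sub>m n rZ) (HX * HX\<^sup>T + HX * HX\<^sup>T)
          (0\<^sub>m rZ n * HZ\<^sup>T + HZ * 0\<^sub>m n rZ) (0\<^sub>m rZ n * HX\<^sup>T + HZ * HX\<^sup>T)"
    unfolding transpose_HZ' by (rule mult_four_block_mat) (use HX HZ in auto)
  also have "\<dots> = four_block_mat (0\<^sub>m rX rZ) (0\<^sub>m rX rX) (0\<^sub>m rZ rZ) (0\<^sub>m rZ rX)"
    using HX HZ css ZX XX by simp
  finally show ?thesis by simp
qed

end

theorem mainTheorem17:
  fixes HX HZ :: "bit mat" and n rX rZ :: nat
  assumes HX: "HX \<in> carrier_mat rX n"
    and HZ: "HZ \<in> carrier_mat rZ n"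
    and css: "HX * HZ\<^sup>T = 0\<^sub>m rX rZ"
  defines "HX' \<equiv> four_block_mat HX HX (0\<^sub>m rZ n) HZ"
    and "HZ' \<equiv> four_block_mat HZ (0\<^sub>m rZ n) HX HX"
    and "d' \<equiv> min (css_dZ HX HZ)
               (Inf {enat (2 * hwt l + hwt g - 2 * hwt (vwedge l g)) | l g.
                       l \<in> ker HZ - rs HX \<and> g \<in> ker HX})"
  shows "HX' * HZ'\<^sup>T = 0\<^sub>m (rX + rZ) (rZ + rX)
    \<and> css_k HX' HZ' = 2 * css_k HX HZ
    \<and> css_dX HX' HZ' = d'
    \<and> css_dZ HX' HZ' = d'"
proof -
  interpret css_doubling HX HZ n rX rZ
    using HX HZ by unfold_locales
  show ?thesis
    unfolding HX'_def HZ'_def d'_def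
    using doubled_orthogonal[OF css] css_k_doubled css_dX_doubled css_dZ_doubled
      Inf_weight_logical_pairs
    by simp
qed

end
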